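(* Let $\alpha,l,L,k>0$ with $L>l$. For $n\in\{1,2,3,\dots\}$ let $x_n=-\frac{\pi}{2\alpha l}+n\frac{\pi}{\alpha l}$, and let $D=[0,+\infty)\setminus\{x_n: n\ge 1\}$. Define $f:D\to\mathbb{R}$ by $$f(x)=\arctan\!\left(\frac{\tan(\alpha l x)}{k\alpha}\right)+(L-l)x .$$ Then $(0,+\infty)\subseteq f(D)$, i.e. every positive real number is a value of $f$.
   Context: $\arctan$ denotes the principal branch with values in $(-\pi/2,\pi/2)$. *)

theory Defs
  imports Complex_Main
begin

definition xpt :: "real \<Rightarrow> real \<Rightarrow> nat \<Rightarrow> real" where
  "xpt \<alpha> l n = - pi / (2 * \<alpha> * l) + real n * (pi / (\<alpha> * l))"

definition dom_D :: "real \<Rightarrow> real \<Rightarrow> real set" where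
  "dom_D \<alpha> l = {0..} - {xpt \<alpha> l n | n. n \<ge> 1}"

definition fL :: "real \<Rightarrow> real \<Rightarrow> real \<Rightarrow> real \<Rightarrow> real \<Rightarrow> real" where
  "fL \<alpha> l L k x = arctan (tan (\<alpha> * l * x) / (k * \<alpha>)) + (L - l) * x"

end

theory Submission
  imports Defs
begin

text \<open>Write \<open>\<alpha> l x = n \<pi> + t\<close> with \<open>|t| < \<pi>/2\<close>. On the \<open>n\<close>-th branch,
  \<open>f x = arctan (tan t / (k \<alpha>)) + b t + b n \<pi>\<close> with \<open>b = (L - l) / (\<alpha> l) > 0\<close>, and as \<open>t\<close> runs
  through \<open>(-\<pi>/2, \<pi>/2)\<close> this tends to \<open>b n \<pi> - (1 + b) \<pi>/2\<close> and \<open>b n \<pi> + (1 + b) \<pi>/2\<close> at the two ends. So by the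
  intermediate value theorem branch \<open>n\<close> attains every value in \<open>[b \<pi> (n - 1/2), b \<pi> (n + 1/2)]\<close>,
  and these intervals cover \<open>(0, \<infinity>)\<close>. The excluded points \<open>x\<^sub>n\<close> are precisely the zeros of
  \<open>cos (\<alpha> l x)\<close>, which the branches avoid.\<close>

lemma tendsto_arctan_tan_div_at_left:
  fixes K :: real
  assumes "K > 0"
  shows "((\<lambda>t. arctan (tan t / K)) \<longlongrightarrow> pi/2) (at_left (pi/2))"
proof -
  have "filterlim (\<lambda>t. inverse K * tan t) at_top (at_left (pi/2))"
    by (rule filterlim_tendsto_pos_mult_at_top[OF tendsto_const _ filterlim_tan_at_left])
      (use assms in simp)
  then have "filterlim (\<lambda>t. tan t / K) at_top (at_left (pi/2))"
    by (simp only: divide_inverse_commute)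
  then show ?thesis
    by (rule filterlim_compose[OF tendsto_arctan_at_top])
qed

lemma tendsto_arctan_tan_div_at_right:
  fixes K :: real
  assumes "K > 0"
  shows "((\<lambda>t. arctan (tan t / K)) \<longlongrightarrow> - (pi/2)) (at_right (- (pi/2)))"
proof -
  have "filterlim (\<lambda>t. inverse K * tan t) at_bot (at_right (- (pi/2)))"
    by (rule filterlim_tendsto_pos_mult_at_bot[OF tendsto_const _ filterlim_tan_at_right])
      (use assms in simp)
  then have "filterlim (\<lambda>t. tan t / K) at_bot (at_right (- (pi/2)))"
    by (simp only: divide_inverse_commute)
  then show ?thesis
    by (rule filterlim_compose[OF tendsto_arctan_at_bot])
qed

lemma eventually_arctan_tan_div_plus_gt:
  fixes K b :: real
  assumes "K > 0"
  shows "\<forall>\<^sub>F t in at_left (pi/2). b * (pi/2) < arctan (tan t / K) + b * t"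
proof -
  have "((\<lambda>t. arctan (tan t / K) + b * t) \<longlongrightarrow> pi/2 + b * (pi/2)) (at_left (pi/2))"
    using assms by (intro tendsto_intros tendsto_arctan_tan_div_at_left)
  then show ?thesis
    by (rule order_tendstoD) simp
qed

lemma eventually_arctan_tan_div_plus_lt:
  fixes K b :: real
  assumes "K > 0"
  shows "\<forall>\<^sub>F t in at_right (- (pi/2)). arctan (tan t / K) + b * t < - b * (pi/2)"
proof -
  have "((\<lambda>t. arctan (tan t / K) + b * t) \<longlongrightarrow> - (pi/2) + b * - (pi/2)) (at_right (- (pi/2)))"
    using assms by (intro tendsto_intros tendsto_arctan_tan_div_at_right)
  then show ?thesis
    by (rule order_tendstoD) simp
qed

lemma continuous_on_arctan_tan_div_plus:
  fixes K b t1 t2 :: real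
  assumes "K \<noteq> 0" "- (pi/2) < t1" "t2 < pi/2"
  shows "continuous_on {t1..t2} (\<lambda>t. arctan (tan t / K) + b * t)"
proof -
  have "cos t \<noteq> 0" if "t \<in> {t1..t2}" for t
    using that assms cos_gt_zero_pi[of t] by auto
  then show ?thesis
    using assms(1) by (intro continuous_intros) auto
qed

lemma arctan_tan_div_plus_attains:
  fixes K b y t1 :: real
  assumes "K > 0" "- (pi/2) < t1" "t1 < pi/2"
    and "arctan (tan t1 / K) + b * t1 \<le> y" "y \<le> b * (pi/2)"
  shows "\<exists>t. t1 \<le> t \<and> t < pi/2 \<and> arctan (tan t / K) + b * t = y"
proof -
  have "\<forall>\<^sub>F t in at_left (pi/2). t \<in> {t1<..<pi/2} \<and> b * (pi/2) < arctan (tan t / K) + b * t"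
    using eventually_at_left_real[OF assms(3)] eventually_arctan_tan_div_plus_gt[OF assms(1)]
    by (rule eventually_conj)
  then obtain t2 where t2: "t1 < t2" "t2 < pi/2" "b * (pi/2) < arctan (tan t2 / K) + b * t2"
    using eventually_happens'[OF trivial_limit_at_left_real] by auto
  have "continuous_on {t1..t2} (\<lambda>t. arctan (tan t / K) + b * t)"
    using assms t2 by (intro continuous_on_arctan_tan_div_plus) auto
  then obtain t where "t1 \<le> t" "t \<le> t2" "arctan (tan t / K) + b * t = y"
    using IVT'[of "\<lambda>t. arctan (tan t / K) + b * t" t1 y t2] assms t2 by auto
  then show ?thesis
    using t2 by auto
qed

lemma arctan_tan_div_plus_surj:
  fixes K b y :: real
  assumes "K > 0" "- b * (pi/2) \<le> y" "y \<le> b * (pi/2)"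
  shows "\<exists>t. - (pi/2) < t \<and> t < pi/2 \<and> arctan (tan t / K) + b * t = y"
proof -
  have "- (pi/2) < pi/2"
    by simp
  from eventually_at_right_real[OF this] have "\<forall>\<^sub>F t in at_right (- (pi/2)).
      t \<in> {- (pi/2)<..<pi/2} \<and> arctan (tan t / K) + b * t < - b * (pi/2)"
    using eventually_arctan_tan_div_plus_lt[OF assms(1)] by (rule eventually_conj)
  then obtain t1 where t1: "- (pi/2) < t1" "t1 < pi/2" "arctan (tan t1 / K) + b * t1 < - b * (pi/2)"
    using eventually_happens'[OF trivial_limit_at_right_real] by auto
  moreover have "arctan (tan t1 / K) + b * t1 \<le> y"
    using t1(3) assms(2) by linarith
  ultimately obtain t where "t1 \<le> t" "t < pi/2" "arctan (tan t / K) + b * t = y"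
    using arctan_tan_div_plus_attains assms(1,3) by blast
  with t1 show ?thesis
    by (intro exI[of _ t]) auto
qed

lemma exists_nat_half_interval:
  fixes p y :: real
  assumes "p > 0" "y \<ge> 0"
  shows "\<exists>n::nat. p * (real n - 1/2) \<le> y \<and> y < p * (real n + 1/2)"
proof -
  define n where "n = nat \<lfloor>y / p + 1/2\<rfloor>"
  have "real n = of_int \<lfloor>y / p + 1/2\<rfloor>"
    using assms by (simp add: n_def)
  then have "real n - 1/2 \<le> y / p" "y / p < real n + 1/2"
    by linarith+
  then show ?thesis
    using assms by (auto simp: field_simps)
qed

lemma arctan_tan_div_plus_branch_attains:
  fixes K b y :: real
  assumes "K > 0" "b > 0" "y > 0"
  obtains n :: nat and t where "- (pi/2) < t" "t < pi/2" "0 \<le> real n * pi + t"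
    "arctan (tan t / K) + b * (real n * pi + t) = y"
proof -
  obtain n :: nat where n: "b * pi * (real n - 1/2) \<le> y" "y < b * pi * (real n + 1/2)"
    using exists_nat_half_interval[of "b * pi" y] assms(2,3) by auto
  show ?thesis
  proof (cases "n = 0")
    case True
    then obtain t where "0 \<le> t" "t < pi/2" "arctan (tan t / K) + b * t = y"
      using arctan_tan_div_plus_attains[of K 0 b y] assms n by auto
    with True show ?thesis
      using that[of t 0] by simp
  next
    case False
    have "- b * (pi/2) \<le> y - b * (real n * pi)" "y - b * (real n * pi) \<le> b * (pi/2)"
      using n by (simp_all add: algebra_simps)
    then obtain t where t: "- (pi/2) < t" "t < pi/2"
      "arctan (tan t / K) + b * t = y - b * (real n * pi)"
      using arctan_tan_div_plus_surj assms(1) by blast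
    have "pi \<le> real n * pi"
      using False by simp
    with t have "0 \<le> real n * pi + t"
      by linarith
    with t show ?thesis
      using that[of t n] by (simp add: algebra_simps)
  qed
qed

lemma cos_xpt:
  assumes "\<alpha> * l \<noteq> 0"
  shows "cos (\<alpha> * l * xpt \<alpha> l n) = 0"
proof -
  have "\<alpha> * l * xpt \<alpha> l n = real n * pi - pi/2"
    using assms by (simp add: xpt_def field_simps)
  then show ?thesis
    by (simp add: cos_diff)
qed

lemma mem_dom_D_if_cos_ne_0:
  assumes "\<alpha> * l \<noteq> 0" "x \<ge> 0" "cos (\<alpha> * l * x) \<noteq> 0"
  shows "x \<in> dom_D \<alpha> l"
  using assms cos_xpt[OF assms(1)] by (auto simp: dom_D_def)

lemma branch_point_mem_dom_D:
  fixes \<alpha> l t :: real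
  assumes "\<alpha> * l > 0" "- (pi/2) < t" "t < pi/2" "0 \<le> real n * pi + t"
  shows "(real n * pi + t) / (\<alpha> * l) \<in> dom_D \<alpha> l"
proof (rule mem_dom_D_if_cos_ne_0)
  have "\<alpha> * l \<noteq> 0"
    using assms(1) by linarith
  then have "cos (\<alpha> * l * ((real n * pi + t) / (\<alpha> * l))) = (- 1) ^ n * cos t"
    by (simp add: cos_add)
  moreover have "cos t > 0"
    using assms(2,3) cos_gt_zero_pi by blast
  ultimately show "cos (\<alpha> * l * ((real n * pi + t) / (\<alpha> * l))) \<noteq> 0"
    by simp
qed (use assms in auto)

lemma fL_branch:
  assumes "\<alpha> * l \<noteq> 0"
  shows "fL \<alpha> l L k ((real n * pi + t) / (\<alpha> * l)) =
    arctan (tan t / (k * \<alpha>)) + (L - l) / (\<alpha> * l) * (real n * pi + t)"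
proof -
  have "\<alpha> * l * ((real n * pi + t) / (\<alpha> * l)) = t + real n * pi"
    using assms by simp
  then have "tan (\<alpha> * l * ((real n * pi + t) / (\<alpha> * l))) = tan t"
    by simp
  then show ?thesis
    unfolding fL_def by simp
qed

theorem lemma2:
  fixes \<alpha> l L k :: real
  assumes "\<alpha> > 0" "l > 0" "L > 0" "k > 0" "L > l"
  shows "{0<..} \<subseteq> fL \<alpha> l L k ` dom_D \<alpha> l"
proof
  fix y :: real
  assume "y \<in> {0<..}"
  have "(L - l) / (\<alpha> * l) > 0" "k * \<alpha> > 0"
    using assms by simp_all
  then obtain n :: nat and t where t: "- (pi/2) < t" "t < pi/2" "0 \<le> real n * pi + t"
    and ft: "arctan (tan t / (k * \<alpha>)) + (L - l) / (\<alpha> * l) * (real n * pi + t) = y"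
    using arctan_tan_div_plus_branch_attains \<open>y \<in> {0<..}\<close> by (metis greaterThan_iff)
  have "\<alpha> * l > 0" "\<alpha> * l \<noteq> 0"
    using assms by simp_all
  then have "(real n * pi + t) / (\<alpha> * l) \<in> dom_D \<alpha> l"
    using t by (intro branch_point_mem_dom_D)
  moreover have "fL \<alpha> l L k ((real n * pi + t) / (\<alpha> * l)) = y"
    using fL_branch[OF \<open>\<alpha> * l \<noteq> 0\<close>] ft by (rule trans)
  ultimately show "y \<in> fL \<alpha> l L k ` dom_D \<alpha> l"
    by blast
qed

end
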